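(* Let $\mathcal{C}'$ be any function mapping a pair consisting of an $\mathcal{ALC}$-formula and an interpretation to an $\mathcal{ALC}$-formula. Then $\mathcal{C}'(\varphi,M)\equiv \mathcal{C}(\varphi,M)$ for every $\mathcal{ALC}$-formula $\varphi$ and every interpretation $M$ (where $\mathcal{C}$ is the finite base model contraction function defined in the context) if and only if $\mathcal{C}'$ satisfies, for every $\mathcal{ALC}$-formula $\varphi$ and every interpretation $M$, the following postulates: (success) $M\not\models \mathcal{C}'(\varphi,M)$; (inclusion) $\mathrm{Mod}(\mathcal{C}'(\varphi,M))\subseteq \mathrm{Mod}(\varphi)$; (atomic retainment) for every set $\mathbb{M}'$ of interpretations, if $\mathrm{Mod}(\mathcal{C}'(\varphi,M))\subsetneq \mathbb{M}'\subseteq \mathrm{Mod}(\varphi)\setminus [M]_\varphi$, then $\mathbb{M}'$ is not finitely representable in $\mathcal{ALC}$-formula; (atomic extensionality) for every interpretation $M'$, if $M'\equiv_\varphi M$ then $\mathrm{Mod}(\mathcal{C}'(\varphi,M))=\mathrm{Mod}(\mathcal{C}'(\varphi,M'))$.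
   Context: Syntax: $N_C,N_R,N_I$ are pairwise disjoint countably infinite sets of concept, role and individual names. $\mathcal{ALC}$ concepts: $C::=A\mid \neg C\mid (C\sqcap C)\mid \exists r.C$ ($A\in N_C$, $r\in N_R$); $\top$, $\sqcup$ are the usual abbreviations. $\mathcal{ALC}$-formulae: $\phi::=\alpha\mid\neg\phi\mid(\phi\wedge\phi)$, with atomic formulae $\alpha::=C(a)\mid r(a,b)\mid (C=\top)$, $a,b\in N_I$; $\vee$ and $\bot$ are the usual abbreviations and $\neg\neg\psi$ is identified with $\psi$. A literal is an atomic formula or the negation of one. Semantics: an interpretation $I=(\Delta^I,\cdot^I)$ has a countable nonempty domain and maps concept names to subsets, role names to binary relations and individual names to elements; concepts are interpreted as usual ($\top^I=\Delta^I$, $(\neg C)^I=\Delta^I\setminus C^I$, $(C\sqcap D)^I=C^I\cap D^I$, $(\exists r.C)^I=\{d\mid \exists d'\in C^I,(d,d')\in r^I\}$); $I\models C(a)$ iff $a^I\in C^I$, $I\models r(a,b)$ iff $(a^I,b^I)\in r^I$, $I\models (C=\top)$ iff $C^I=\Delta^I$, with $\neg,\wedge$ classical. Models are interpretations; $\mathrm{Mod}(\varphi)$ is the set of interpretations satisfying $\varphi$; $\varphi\equiv\psi$ iff $\mathrm{Mod}(\varphi)=\mathrm{Mod}(\psi)$. A set of interpretations is finitely representable in $\mathcal{ALC}$-formula if it equals $\mathrm{Mod}$ of some finite set of $\mathcal{ALC}$-formulae (equivalently of a single $\mathcal{ALC}$-formula). Subformulae: $\mathrm{Sub}(\alpha)=\mathrm{Sub}(\neg\alpha)=\{\alpha,\neg\alpha\}$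 for atomic $\alpha$; $\mathrm{Sub}(\psi\wedge\psi')=\mathrm{Sub}(\neg(\psi\wedge\psi'))=\{\psi\wedge\psi',\neg(\psi\wedge\psi')\}\cup\mathrm{Sub}(\psi)\cup\mathrm{Sub}(\psi')$. $\mathrm{con}(\varphi)$ is the smallest set of concepts containing $C$ whenever $(C=\top)\in\mathrm{Sub}(\varphi)$ or $C(a)\in\mathrm{Sub}(\varphi)$, containing $C,D$ whenever it contains $C\sqcap D$, containing $C$ whenever it contains $\exists r.C$, and closed under single negation. $\mathrm{ind}(\varphi)$ is the set of individual names in $\varphi$. A concept type for $\varphi$ is $c\subseteq\mathrm{con}(\varphi)$ with: $D\in c$ iff $\neg D\notin c$ for all $D\in\mathrm{con}(\varphi)$, and $D\sqcap E\in c$ iff $\{D,E\}\subseteq c$ for all $D\sqcap E\in\mathrm{con}(\varphi)$. A formula type for $\varphi$ is $f\subseteq\mathrm{Sub}(\varphi)$ with: $\psi\in f$ iff $\neg\psi\notin f$ for all $\psi\in\mathrm{Sub}(\varphi)$, and $\psi\wedge\psi'\in f$ iff $\{\psi,\psi'\}\subseteq f$ for all $\psi\wedge\psi'\in\mathrm{Sub}(\varphi)$. A model candidate for $\varphi$ is $(T,o,f)$ with $T$ a set of concept types, $o:\mathrm{ind}(\varphi)\to T$, $f$ a formula type, such that $\varphi\in f$; $C(a)\in f$ implies $C\in o(a)$; $r(a,b)\in f$ implies $\{\neg C\mid\neg\exists r.C\in o(a)\}\subseteq o(b)$. It is a quasimodel for $\varphi$ if moreover: for every $c\in T$ and $\exists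 r.D\in c$ there is $c'\in T$ with $\{D\}\cup\{\neg E\mid \neg\exists r.E\in c\}\subseteq c'$; for every $c\in T$ and concept $C$, $\neg C\in c$ implies $(C=\top)\notin f$; for every concept $C$, $\neg(C=\top)\in f$ implies some $c\in T$ has $C\notin c$; $T\neq\emptyset$. $\mathrm{ftypes}(\varphi)=\{f\mid (T,o,f)$ a quasimodel for $\varphi\}$. For an interpretation $I$, $\mathrm{qm}(\varphi,I)=(T,o,f)$ where $T=\{c(x)\mid x\in\Delta^I\}$ with $c(x)=\{C\in\mathrm{con}(\varphi)\mid x\in C^I\}$, $o(a)=c(a^I)$, $f=\{\psi\in\mathrm{Sub}(\varphi)\mid I\models\psi\}$. $\mathrm{lit}(f)$ is the set of literals in $f$. $\mathrm{qfilter}(\varphi,M)=\mathrm{ftypes}(\varphi)\setminus\{f\}$ where $\mathrm{qm}(\varphi,M)=(T,o,f)$. The finite base model contraction function is $\mathcal{C}(\varphi,M)=\bigvee_{f\in\mathrm{qfilter}(\varphi,M)}\bigwedge\mathrm{lit}(f)$ if $M\models\varphi$ and $\mathrm{qfilter}(\varphi,M)\neq\emptyset$; $\bot$ if $M\models\varphi$ and $\mathrm{qfilter}(\varphi,M)=\emptyset$; $\varphi$ otherwise. $\mathcal{L}_{lit}(\varphi)$ is the set of Boolean combinations of the atomic formulae occurring in $\varphi$; $M\equiv_\varphi M'$ iff for all $\psi\in\mathcal{L}_{lit}(\varphi)$, $M\models\psi$ iff $M'\models\psi$; $[M]_\varphi=\{M'\mid M'\equiv_\varphi M\}$. *)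

theory Defs
  imports Main
begin

section \<open>Syntax of ALC (concept, role and individual names are natural numbers)\<close>

datatype concept =
    CName nat
  | CNot concept
  | CAnd concept concept
  | CEx nat concept

datatype atom =
    CAssert concept nat
  | RAssert nat nat nat        (* r(a,b) *)
  | TBox concept               (* C = top *)

datatype formula =
    Atom atom
  | FNot formula
  | FAnd formula formula

definition ctop :: concept where
  "ctop = CNot (CAnd (CName 0) (CNot (CName 0)))"

definition ftrue :: formula where
  "ftrue = Atom (TBox ctop)"

definition ffalse :: formula where
  "ffalse = FNot ftrue"

definition FOr :: "formula \<Rightarrow> formula \<Rightarrow> formula" where
  "FOr a b = FNot (FAnd (FNot a) (FNot b))"

text \<open>Identification of double negations: single negation and normalisation.\<close>

fun cneg :: "concept \<Rightarrow> concept" where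
  "cneg (CNot C) = C"
| "cneg C = CNot C"

fun cnorm :: "concept \<Rightarrow> concept" where
  "cnorm (CName A) = CName A"
| "cnorm (CNot C) = cneg (cnorm C)"
| "cnorm (CAnd C D) = CAnd (cnorm C) (cnorm D)"
| "cnorm (CEx r C) = CEx r (cnorm C)"

fun anorm :: "atom \<Rightarrow> atom" where
  "anorm (CAssert C a) = CAssert (cnorm C) a"
| "anorm (RAssert r a b) = RAssert r a b"
| "anorm (TBox C) = TBox (cnorm C)"

fun neg :: "formula \<Rightarrow> formula" where
  "neg (FNot \<psi>) = \<psi>"
| "neg \<psi> = FNot \<psi>"

fun norm :: "formula \<Rightarrow> formula" where
  "norm (Atom \<alpha>) = Atom (anorm \<alpha>)"
| "norm (FNot \<psi>) = neg (norm \<psi>)"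
| "norm (FAnd \<psi> \<chi>) = FAnd (norm \<psi>) (norm \<chi>)"

record interp =
  dom :: "nat set"
  cI  :: "nat \<Rightarrow> nat set"
  rI  :: "nat \<Rightarrow> (nat \<times> nat) set"
  iI  :: "nat \<Rightarrow> nat"

text \<open>An interpretation: nonempty (countable, as a subset of nat) domain.\<close>
definition wf_interp :: "interp \<Rightarrow> bool" where
  "wf_interp I \<longleftrightarrow> dom I \<noteq> {} \<and> (\<forall>A. cI I A \<subseteq> dom I)
     \<and> (\<forall>r. rI I r \<subseteq> dom I \<times> dom I) \<and> (\<forall>a. iI I a \<in> dom I)"

fun ext :: "interp \<Rightarrow> concept \<Rightarrow> nat set" where
  "ext I (CName A) = cI I A"
| "ext I (CNot C) = dom I - ext I C"
| "ext I (CAnd C D) = ext I C \<inter> ext I D"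
| "ext I (CEx r C) = {d \<in> dom I. \<exists>d' \<in> ext I C. (d, d') \<in> rI I r}"

fun asat :: "interp \<Rightarrow> atom \<Rightarrow> bool" where
  "asat I (CAssert C a) = (iI I a \<in> ext I C)"
| "asat I (RAssert r a b) = ((iI I a, iI I b) \<in> rI I r)"
| "asat I (TBox C) = (ext I C = dom I)"

fun sat :: "interp \<Rightarrow> formula \<Rightarrow> bool" where
  "sat I (Atom \<alpha>) = asat I \<alpha>"
| "sat I (FNot \<psi>) = (\<not> sat I \<psi>)"
| "sat I (FAnd \<psi> \<chi>) = (sat I \<psi> \<and> sat I \<chi>)"

definition Mod :: "formula \<Rightarrow> interp set" where
  "Mod \<phi> = {I. wf_interp I \<and> sat I \<phi>}"

definition fin_rep :: "interp set \<Rightarrow> bool" where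
  "fin_rep S \<longleftrightarrow> (\<exists>\<Phi>. finite \<Phi> \<and> S = {I. wf_interp I \<and> (\<forall>\<phi>\<in>\<Phi>. sat I \<phi>)})"

fun Sub' :: "formula \<Rightarrow> formula set" where
  "Sub' (Atom \<alpha>) = {Atom \<alpha>, FNot (Atom \<alpha>)}"
| "Sub' (FNot \<psi>) = Sub' \<psi>"
| "Sub' (FAnd \<psi> \<chi>) = {FAnd \<psi> \<chi>, FNot (FAnd \<psi> \<chi>)} \<union> Sub' \<psi> \<union> Sub' \<chi>"

definition Sub :: "formula \<Rightarrow> formula set" where
  "Sub \<phi> = Sub' (norm \<phi>)"

inductive_set con :: "formula \<Rightarrow> concept set" for \<phi> where
  con_tbox: "Atom (TBox C) \<in> Sub \<phi> \<Longrightarrow> C \<in> con \<phi>"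
| con_assert: "Atom (CAssert C a) \<in> Sub \<phi> \<Longrightarrow> C \<in> con \<phi>"
| con_and1: "CAnd C D \<in> con \<phi> \<Longrightarrow> C \<in> con \<phi>"
| con_and2: "CAnd C D \<in> con \<phi> \<Longrightarrow> D \<in> con \<phi>"
| con_ex: "CEx r C \<in> con \<phi> \<Longrightarrow> C \<in> con \<phi>"
| con_neg: "C \<in> con \<phi> \<Longrightarrow> cneg C \<in> con \<phi>"

fun aind :: "atom \<Rightarrow> nat set" where
  "aind (CAssert C a) = {a}"
| "aind (RAssert r a b) = {a, b}"
| "aind (TBox C) = {}"

fun ind :: "formula \<Rightarrow> nat set" where
  "ind (Atom \<alpha>) = aind \<alpha>"
| "ind (FNot \<psi>) = ind \<psi>"
| "ind (FAnd \<psi> \<chi>) = ind \<psi> \<union> ind \<chi>"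

definition concept_type :: "formula \<Rightarrow> concept set \<Rightarrow> bool" where
  "concept_type \<phi> c \<longleftrightarrow> c \<subseteq> con \<phi>
     \<and> (\<forall>D \<in> con \<phi>. D \<in> c \<longleftrightarrow> cneg D \<notin> c)
     \<and> (\<forall>D E. CAnd D E \<in> con \<phi> \<longrightarrow> (CAnd D E \<in> c \<longleftrightarrow> D \<in> c \<and> E \<in> c))"

definition formula_type :: "formula \<Rightarrow> formula set \<Rightarrow> bool" where
  "formula_type \<phi> f \<longleftrightarrow> f \<subseteq> Sub \<phi>
     \<and> (\<forall>\<psi> \<in> Sub \<phi>. \<psi> \<in> f \<longleftrightarrow> neg \<psi> \<notin> f)
     \<and> (\<forall>\<psi> \<chi>. FAnd \<psi> \<chi> \<in> Sub \<phi> \<longrightarrow> (FAnd \<psi> \<chi> \<in> f \<longleftrightarrow> \<psi> \<in> f \<and> \<chi> \<in> f))"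

definition model_candidate ::
    "formula \<Rightarrow> concept set set \<Rightarrow> (nat \<Rightarrow> concept set) \<Rightarrow> formula set \<Rightarrow> bool" where
  "model_candidate \<phi> T oo f \<longleftrightarrow>
     (\<forall>c \<in> T. concept_type \<phi> c) \<and> (\<forall>a \<in> ind \<phi>. oo a \<in> T) \<and> formula_type \<phi> f
     \<and> norm \<phi> \<in> f
     \<and> (\<forall>C a. Atom (CAssert C a) \<in> f \<longrightarrow> C \<in> oo a)
     \<and> (\<forall>r a b. Atom (RAssert r a b) \<in> f \<longrightarrow>
          {cneg C | C. CNot (CEx r C) \<in> oo a} \<subseteq> oo b)"

definition quasimodel ::
    "formula \<Rightarrow> concept set set \<Rightarrow> (nat \<Rightarrow> concept set) \<Rightarrow> formula set \<Rightarrow> bool" where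
  "quasimodel \<phi> T oo f \<longleftrightarrow> model_candidate \<phi> T oo f
     \<and> (\<forall>c \<in> T. \<forall>r D. CEx r D \<in> c \<longrightarrow>
          (\<exists>c' \<in> T. {D} \<union> {cneg E | E. CNot (CEx r E) \<in> c} \<subseteq> c'))
     \<and> (\<forall>c \<in> T. \<forall>C. cneg C \<in> c \<longrightarrow> Atom (TBox C) \<notin> f)
     \<and> (\<forall>C. FNot (Atom (TBox C)) \<in> f \<longrightarrow> (\<exists>c \<in> T. C \<notin> c))
     \<and> T \<noteq> {}"

definition ftypes :: "formula \<Rightarrow> formula set set" where
  "ftypes \<phi> = {f. \<exists>T oo. quasimodel \<phi> T oo f}"

text \<open>The formula-type component of qm(phi, I) (the only component qfilter uses);
  the other components are given for completeness.\<close>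
definition qm_T :: "formula \<Rightarrow> interp \<Rightarrow> concept set set" where
  "qm_T \<phi> I = {{C \<in> con \<phi>. x \<in> ext I C} | x. x \<in> dom I}"

definition qm_o :: "formula \<Rightarrow> interp \<Rightarrow> nat \<Rightarrow> concept set" where
  "qm_o \<phi> I a = {C \<in> con \<phi>. iI I a \<in> ext I C}"

definition qm_f :: "formula \<Rightarrow> interp \<Rightarrow> formula set" where
  "qm_f \<phi> I = {\<psi> \<in> Sub \<phi>. sat I \<psi>}"

definition qfilter :: "formula \<Rightarrow> interp \<Rightarrow> formula set set" where
  "qfilter \<phi> M = ftypes \<phi> - {qm_f \<phi> M}"

fun is_lit :: "formula \<Rightarrow> bool" where
  "is_lit (Atom \<alpha>) = True"
| "is_lit (FNot (Atom \<alpha>)) = True"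
| "is_lit _ = False"

definition lit :: "formula set \<Rightarrow> formula set" where
  "lit f = {\<psi> \<in> f. is_lit \<psi>}"

definition list_of :: "'a set \<Rightarrow> 'a list" where
  "list_of S = (SOME xs. set xs = S)"

definition BigAnd :: "formula set \<Rightarrow> formula" where
  "BigAnd S = foldr FAnd (list_of S) ftrue"

definition BigOr :: "formula set \<Rightarrow> formula" where
  "BigOr S = foldr FOr (list_of S) ffalse"

definition contr :: "formula \<Rightarrow> interp \<Rightarrow> formula" where
  "contr \<phi> M =
     (if sat M \<phi> then
        (if qfilter \<phi> M \<noteq> {} then BigOr ((\<lambda>f. BigAnd (lit f)) ` qfilter \<phi> M) else ffalse)
      else \<phi>)"

fun atoms :: "formula \<Rightarrow> atom set" where
  "atoms (Atom \<alpha>) = {\<alpha>}"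
| "atoms (FNot \<psi>) = atoms \<psi>"
| "atoms (FAnd \<psi> \<chi>) = atoms \<psi> \<union> atoms \<chi>"

inductive_set Llit :: "formula \<Rightarrow> formula set" for \<phi> where
  Llit_atom: "\<alpha> \<in> atoms \<phi> \<Longrightarrow> Atom \<alpha> \<in> Llit \<phi>"
| Llit_not: "\<psi> \<in> Llit \<phi> \<Longrightarrow> FNot \<psi> \<in> Llit \<phi>"
| Llit_and: "\<psi> \<in> Llit \<phi> \<Longrightarrow> \<chi> \<in> Llit \<phi> \<Longrightarrow> FAnd \<psi> \<chi> \<in> Llit \<phi>"

definition atom_equiv :: "formula \<Rightarrow> interp \<Rightarrow> interp \<Rightarrow> bool" where
  "atom_equiv \<phi> M M' \<longleftrightarrow> (\<forall>\<psi> \<in> Llit \<phi>. sat M \<psi> \<longleftrightarrow> sat M' \<psi>)"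

definition atom_class :: "formula \<Rightarrow> interp \<Rightarrow> interp set" where
  "atom_class \<phi> M = {M'. wf_interp M' \<and> atom_equiv \<phi> M' M}"

end

theory Submission
  imports Defs
begin

(* For a model M of phi, an interpretation I satisfies the disjunct of a formula type f in
  contr phi M iff f is the type qm_f phi I realised by I, because a formula type is determined by
  its literals. The types realised by models of phi all lie in ftypes phi (the quasimodel read off
  from the interpretation witnesses this), and I and M realise the same type iff they agree on the
  atoms of phi. Hence Mod (contr phi M) = Mod phi - [M]_phi, which holds trivially when M is not
  a model of phi.
  The postulates pin down exactly this set: success and atomic extensionality keep
  Mod (C' phi M) disjoint from [M]_phi, inclusion keeps it inside Mod phi, and since
  Mod phi - [M]_phi is finitely representable (by contr phi M), atomic retainment rules out a
  proper subset. *)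

section \<open>Normalisation preserves the semantics\<close>

lemma ext_subset_dom: "wf_interp I \<Longrightarrow> ext I C \<subseteq> dom I"
  by (induction C) (auto simp: wf_interp_def)

lemma ext_cneg: "wf_interp I \<Longrightarrow> ext I (cneg C) = dom I - ext I C"
  by (cases C) (use ext_subset_dom in auto)

lemma ext_cnorm: "wf_interp I \<Longrightarrow> ext I (cnorm C) = ext I C"
  by (induction C) (auto simp: ext_cneg)

lemma asat_anorm: "wf_interp I \<Longrightarrow> asat I (anorm \<alpha>) = asat I \<alpha>"
  by (cases \<alpha>) (auto simp: ext_cnorm)

lemma sat_neg: "sat I (neg \<psi>) = (\<not> sat I \<psi>)"
  by (cases \<psi> rule: neg.cases) auto

lemma sat_norm: "wf_interp I \<Longrightarrow> sat I (norm \<psi>) = sat I \<psi>"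
  by (induction \<psi>) (auto simp: sat_neg asat_anorm)

lemma sat_cong_atoms: "(\<And>\<alpha>. \<alpha> \<in> atoms \<psi> \<Longrightarrow> asat I \<alpha> = asat J \<alpha>) \<Longrightarrow> sat I \<psi> = sat J \<psi>"
  by (induction \<psi>) auto

lemma sat_ftrue: "sat I ftrue"
  by (auto simp: ftrue_def ctop_def)

(* Sub' forgets double negations, so a formula belongs to its own Sub' only if it has none;
  norm guarantees this. *)
fun no_double_neg :: "formula \<Rightarrow> bool" where
  "no_double_neg (Atom _) = True"
| "no_double_neg (FNot (FNot _)) = False"
| "no_double_neg (FNot \<psi>) = no_double_neg \<psi>"
| "no_double_neg (FAnd \<psi> \<chi>) = (no_double_neg \<psi> \<and> no_double_neg \<chi>)"

lemma no_double_neg_neg: "no_double_neg \<psi> \<Longrightarrow> no_double_neg (neg \<psi>)"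
  by (cases \<psi> rule: neg.cases) (auto elim: no_double_neg.elims)

lemma no_double_neg_norm: "no_double_neg (norm \<psi>)"
  by (induction \<psi>) (auto simp: no_double_neg_neg)

lemma self_in_Sub': "no_double_neg \<psi> \<Longrightarrow> \<psi> \<in> Sub' \<psi>"
  by (induction \<psi> rule: no_double_neg.induct) auto

lemma Sub'_FAndD: "FAnd \<psi> \<chi> \<in> Sub' \<theta> \<Longrightarrow> no_double_neg \<theta> \<Longrightarrow> \<psi> \<in> Sub' \<theta> \<and> \<chi> \<in> Sub' \<theta>"
  by (induction \<theta> rule: no_double_neg.induct) (auto intro: self_in_Sub')

lemma Sub'_neg: "Sub' (neg \<psi>) = Sub' \<psi>"
  by (cases \<psi> rule: neg.cases) auto

lemma norm_in_Sub: "norm \<phi> \<in> Sub \<phi>"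
  by (simp add: Sub_def self_in_Sub' no_double_neg_norm)

lemma neg_in_Sub: "\<psi> \<in> Sub \<phi> \<Longrightarrow> neg \<psi> \<in> Sub \<phi>"
proof -
  have "\<psi> \<in> Sub' \<chi> \<Longrightarrow> neg \<psi> \<in> Sub' \<chi>" for \<chi> by (induction \<chi>) auto
  then show "\<psi> \<in> Sub \<phi> \<Longrightarrow> ?thesis" by (simp add: Sub_def)
qed

lemma Sub_FNotD: "FNot \<psi> \<in> Sub \<phi> \<Longrightarrow> \<psi> \<in> Sub \<phi>"
proof -
  have "FNot \<psi> \<in> Sub' \<chi> \<Longrightarrow> \<psi> \<in> Sub' \<chi>" for \<chi> by (induction \<chi>) auto
  then show "FNot \<psi> \<in> Sub \<phi> \<Longrightarrow> ?thesis" by (simp add: Sub_def)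
qed

lemma Sub_FAndD: "FAnd \<psi> \<chi> \<in> Sub \<phi> \<Longrightarrow> \<psi> \<in> Sub \<phi> \<and> \<chi> \<in> Sub \<phi>"
  unfolding Sub_def using Sub'_FAndD no_double_neg_norm by blast

lemma finite_Sub: "finite (Sub \<phi>)"
proof -
  have "finite (Sub' \<psi>)" for \<psi> by (induction \<psi>) auto
  then show ?thesis by (simp add: Sub_def)
qed

lemma atoms_Sub: "\<psi> \<in> Sub \<phi> \<Longrightarrow> atoms \<psi> \<subseteq> anorm ` atoms \<phi>"
proof -
  have "\<psi> \<in> Sub' \<chi> \<Longrightarrow> atoms \<psi> \<subseteq> atoms \<chi>" for \<chi> by (induction \<chi>) auto
  moreover have "atoms (neg \<chi>) = atoms \<chi>" for \<chi> by (cases \<chi> rule: neg.cases) auto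
  then have "atoms (norm \<phi>) = anorm ` atoms \<phi>" by (induction \<phi>) auto
  ultimately show "\<psi> \<in> Sub \<phi> \<Longrightarrow> ?thesis" by (metis Sub_def)
qed

lemma Atom_anorm_in_Sub: "\<alpha> \<in> atoms \<phi> \<Longrightarrow> Atom (anorm \<alpha>) \<in> Sub \<phi>"
  unfolding Sub_def by (induction \<phi>) (auto simp: Sub'_neg)

section \<open>Atomic equivalence and formula types\<close>

lemma atoms_Llit: "\<psi> \<in> Llit \<phi> \<Longrightarrow> atoms \<psi> \<subseteq> atoms \<phi>"
  by (induction rule: Llit.induct) auto

lemma atom_equiv_iff_agree_on_atoms:
  "atom_equiv \<phi> I J \<longleftrightarrow> (\<forall>\<alpha> \<in> atoms \<phi>. asat I \<alpha> = asat J \<alpha>)"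
proof
  assume "atom_equiv \<phi> I J"
  then show "\<forall>\<alpha> \<in> atoms \<phi>. asat I \<alpha> = asat J \<alpha>"
    unfolding atom_equiv_def by (metis Llit_atom sat.simps(1))
next
  assume "\<forall>\<alpha> \<in> atoms \<phi>. asat I \<alpha> = asat J \<alpha>"
  then show "atom_equiv \<phi> I J"
    unfolding atom_equiv_def by (metis atoms_Llit sat_cong_atoms subsetD)
qed

lemma qm_f_eq_iff_atom_equiv:
  assumes "wf_interp I" "wf_interp J"
  shows "qm_f \<phi> I = qm_f \<phi> J \<longleftrightarrow> atom_equiv \<phi> I J"
proof
  assume "qm_f \<phi> I = qm_f \<phi> J"
  then have "sat I (Atom (anorm \<alpha>)) = sat J (Atom (anorm \<alpha>))" if "\<alpha> \<in> atoms \<phi>" for \<alpha>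
    using Atom_anorm_in_Sub[OF that] unfolding qm_f_def by blast
  then show "atom_equiv \<phi> I J"
    using assms by (simp add: atom_equiv_iff_agree_on_atoms asat_anorm)
next
  assume "atom_equiv \<phi> I J"
  then have agree: "asat I \<beta> = asat J \<beta>" if "\<beta> \<in> anorm ` atoms \<phi>" for \<beta>
    using that assms by (auto simp: atom_equiv_iff_agree_on_atoms asat_anorm)
  have "sat I \<psi> = sat J \<psi>" if "\<psi> \<in> Sub \<phi>" for \<psi>
    using atoms_Sub[OF that] by (intro sat_cong_atoms agree) blast
  then show "qm_f \<phi> I = qm_f \<phi> J" by (auto simp: qm_f_def)
qed

lemma sat_iff_norm_in_qm_f: "wf_interp I \<Longrightarrow> sat I \<phi> \<longleftrightarrow> norm \<phi> \<in> qm_f \<phi> I"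
  by (simp add: qm_f_def norm_in_Sub sat_norm)

lemma formula_type_neg_iff:
  "formula_type \<phi> f \<Longrightarrow> \<psi> \<in> Sub \<phi> \<Longrightarrow> \<psi> \<in> f \<longleftrightarrow> neg \<psi> \<notin> f"
  unfolding formula_type_def by blast

lemma formula_type_FAnd_iff:
  "formula_type \<phi> f \<Longrightarrow> FAnd \<psi> \<chi> \<in> Sub \<phi> \<Longrightarrow> FAnd \<psi> \<chi> \<in> f \<longleftrightarrow> \<psi> \<in> f \<and> \<chi> \<in> f"
  unfolding formula_type_def by blast

lemma qm_f_eq_if_sat_lit:
  assumes ft: "formula_type \<phi> f" and lits: "\<forall>\<psi> \<in> lit f. sat I \<psi>"
  shows "f = qm_f \<phi> I"
proof -
  have "\<psi> \<in> Sub \<phi> \<Longrightarrow> \<psi> \<in> f \<longleftrightarrow> sat I \<psi>" for \<psi>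
  proof (induction \<psi>)
    case (Atom \<alpha>)
    then have "Atom \<alpha> \<in> f \<longleftrightarrow> FNot (Atom \<alpha>) \<notin> f"
      using formula_type_neg_iff[OF ft] by fastforce
    moreover have "Atom \<alpha> \<in> lit f" if "Atom \<alpha> \<in> f" using that by (simp add: lit_def)
    moreover have "FNot (Atom \<alpha>) \<in> lit f" if "FNot (Atom \<alpha>) \<in> f" using that by (simp add: lit_def)
    ultimately show ?case using lits by (metis sat.simps(1,2))
  next
    case (FNot \<psi>)
    from FNot.prems have "\<psi> \<in> Sub \<phi>" by (rule Sub_FNotD)
    moreover have "FNot \<psi> \<in> f \<longleftrightarrow> \<psi> \<notin> f" using formula_type_neg_iff[OF ft FNot.prems] by simp
    ultimately show ?case using FNot.IH by simp
  next
    case (FAnd \<psi> \<chi>)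
    from FAnd.prems have "\<psi> \<in> Sub \<phi>" "\<chi> \<in> Sub \<phi>" using Sub_FAndD by blast+
    then show ?case using FAnd formula_type_FAnd_iff[OF ft] by simp
  qed
  moreover have "f \<subseteq> Sub \<phi>" using ft by (simp add: formula_type_def)
  ultimately show ?thesis unfolding qm_f_def by blast
qed

section \<open>The quasimodel of an interpretation\<close>

definition qm_type :: "formula \<Rightarrow> interp \<Rightarrow> nat \<Rightarrow> concept set" where
  "qm_type \<phi> I x = {C \<in> con \<phi>. x \<in> ext I C}"

lemma qm_T_eq: "qm_T \<phi> I = qm_type \<phi> I ` dom I"
  by (auto simp: qm_T_def qm_type_def)

lemma qm_o_eq: "qm_o \<phi> I a = qm_type \<phi> I (iI I a)"
  by (simp add: qm_o_def qm_type_def)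

lemma concept_type_qm_type:
  assumes "wf_interp I" "x \<in> dom I"
  shows "concept_type \<phi> (qm_type \<phi> I x)"
  unfolding concept_type_def
proof (intro conjI ballI allI impI)
  show "qm_type \<phi> I x \<subseteq> con \<phi>" by (auto simp: qm_type_def)
next
  fix D assume "D \<in> con \<phi>"
  moreover from this have "cneg D \<in> con \<phi>" by (rule con_neg)
  ultimately show "D \<in> qm_type \<phi> I x \<longleftrightarrow> cneg D \<notin> qm_type \<phi> I x"
    using assms by (simp add: qm_type_def ext_cneg)
next
  fix D E assume "CAnd D E \<in> con \<phi>"
  moreover from this have "D \<in> con \<phi>" "E \<in> con \<phi>" by (rule con_and1, rule con_and2)
  ultimately show "CAnd D E \<in> qm_type \<phi> I x \<longleftrightarrow> D \<in> qm_type \<phi> I x \<and> E \<in> qm_type \<phi> I x"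
    by (simp add: qm_type_def)
qed

lemma qm_type_role_successor:
  assumes "wf_interp I" "(x, y) \<in> rI I r"
  shows "{cneg E | E. CNot (CEx r E) \<in> qm_type \<phi> I x} \<subseteq> qm_type \<phi> I y"
proof safe
  fix E assume E: "CNot (CEx r E) \<in> qm_type \<phi> I x"
  have "CNot (CEx r E) \<in> con \<phi>" using E by (simp add: qm_type_def)
  from con_neg[OF this] have "CEx r E \<in> con \<phi>" by simp
  then have "cneg E \<in> con \<phi>" by (rule con_neg[OF con_ex])
  moreover have "y \<in> dom I" "y \<notin> ext I E"
    using assms E by (auto simp: qm_type_def wf_interp_def)
  ultimately show "cneg E \<in> qm_type \<phi> I y"
    using assms(1) by (simp add: qm_type_def ext_cneg)
qed

lemma qm_type_CEx_witness:
  assumes wf: "wf_interp I" and ex: "CEx r D \<in> qm_type \<phi> I x"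
  shows "\<exists>y \<in> dom I. {D} \<union> {cneg E | E. CNot (CEx r E) \<in> qm_type \<phi> I x} \<subseteq> qm_type \<phi> I y"
proof -
  from ex obtain y where y: "y \<in> ext I D" "(x, y) \<in> rI I r" and "CEx r D \<in> con \<phi>"
    by (auto simp: qm_type_def)
  from this(3) have "D \<in> con \<phi>" by (rule con_ex)
  with y(1) have "D \<in> qm_type \<phi> I y" by (simp add: qm_type_def)
  moreover have "y \<in> dom I" using y(1) ext_subset_dom[OF wf] by blast
  ultimately show ?thesis using qm_type_role_successor[OF wf y(2)] by blast
qed

lemma formula_type_qm_f: "formula_type \<phi> (qm_f \<phi> I)"
  unfolding formula_type_def
proof (intro conjI ballI allI impI)
  show "qm_f \<phi> I \<subseteq> Sub \<phi>" by (auto simp: qm_f_def)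
next
  fix \<psi> assume "\<psi> \<in> Sub \<phi>"
  moreover from this have "neg \<psi> \<in> Sub \<phi>" by (rule neg_in_Sub)
  ultimately show "\<psi> \<in> qm_f \<phi> I \<longleftrightarrow> neg \<psi> \<notin> qm_f \<phi> I"
    by (simp add: qm_f_def sat_neg)
next
  fix \<psi> \<chi> assume "FAnd \<psi> \<chi> \<in> Sub \<phi>"
  moreover from this have "\<psi> \<in> Sub \<phi>" "\<chi> \<in> Sub \<phi>" using Sub_FAndD by blast+
  ultimately show "FAnd \<psi> \<chi> \<in> qm_f \<phi> I \<longleftrightarrow> \<psi> \<in> qm_f \<phi> I \<and> \<chi> \<in> qm_f \<phi> I"
    by (simp add: qm_f_def)
qed

lemma model_candidate_qm:
  assumes wf: "wf_interp I" and "sat I \<phi>"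
  shows "model_candidate \<phi> (qm_T \<phi> I) (qm_o \<phi> I) (qm_f \<phi> I)"
  unfolding model_candidate_def qm_T_eq qm_o_eq
proof (intro conjI allI impI ballI)
  show "concept_type \<phi> c" if "c \<in> qm_type \<phi> I ` dom I" for c
    using that wf concept_type_qm_type by blast
  show "qm_type \<phi> I (iI I a) \<in> qm_type \<phi> I ` dom I" for a
    using wf by (simp add: wf_interp_def)
  show "formula_type \<phi> (qm_f \<phi> I)" by (rule formula_type_qm_f)
  show "norm \<phi> \<in> qm_f \<phi> I" using assms by (simp add: sat_iff_norm_in_qm_f)
  show "C \<in> qm_type \<phi> I (iI I a)" if "Atom (CAssert C a) \<in> qm_f \<phi> I" for C a
    using that by (auto simp: qm_f_def qm_type_def intro: con_assert)
  show "{cneg C |C. CNot (CEx r C) \<in> qm_type \<phi> I (iI I a)} \<subseteq> qm_type \<phi> I (iI I b)"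
    if "Atom (RAssert r a b) \<in> qm_f \<phi> I" for r a b
    using that wf qm_type_role_successor by (simp add: qm_f_def)
qed

lemma quasimodel_qm:
  assumes wf: "wf_interp I" and "sat I \<phi>"
  shows "quasimodel \<phi> (qm_T \<phi> I) (qm_o \<phi> I) (qm_f \<phi> I)"
  unfolding quasimodel_def
proof (intro conjI model_candidate_qm assms)
  show "\<forall>c \<in> qm_T \<phi> I. \<forall>r D. CEx r D \<in> c \<longrightarrow>
          (\<exists>c' \<in> qm_T \<phi> I. {D} \<union> {cneg E | E. CNot (CEx r E) \<in> c} \<subseteq> c')"
    using qm_type_CEx_witness[OF wf] by (fastforce simp: qm_T_eq)
  show "\<forall>c \<in> qm_T \<phi> I. \<forall>C. cneg C \<in> c \<longrightarrow> Atom (TBox C) \<notin> qm_f \<phi> I"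
    unfolding qm_T_eq
  proof (intro ballI allI impI, elim imageE)
    fix c C x assume "cneg C \<in> c" "c = qm_type \<phi> I x"
    then have "x \<in> ext I (cneg C)" by (simp add: qm_type_def)
    then have "ext I C \<noteq> dom I" using wf by (auto simp: ext_cneg)
    then show "Atom (TBox C) \<notin> qm_f \<phi> I" by (simp add: qm_f_def)
  qed
  show "\<forall>C. FNot (Atom (TBox C)) \<in> qm_f \<phi> I \<longrightarrow> (\<exists>c \<in> qm_T \<phi> I. C \<notin> c)"
  proof (intro allI impI)
    fix C assume "FNot (Atom (TBox C)) \<in> qm_f \<phi> I"
    then have "ext I C \<noteq> dom I" by (simp add: qm_f_def)
    then obtain x where "x \<in> dom I" "x \<notin> ext I C" using ext_subset_dom[OF wf] by blast
    then show "\<exists>c \<in> qm_T \<phi> I. C \<notin> c" by (auto simp: qm_T_eq qm_type_def)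
  qed
  show "qm_T \<phi> I \<noteq> {}"
    using wf by (simp add: qm_T_eq wf_interp_def)
qed

section \<open>Semantics of the contraction\<close>

lemma ftypesD: "f \<in> ftypes \<phi> \<Longrightarrow> formula_type \<phi> f \<and> norm \<phi> \<in> f"
  unfolding ftypes_def quasimodel_def model_candidate_def by blast

lemma qm_f_in_ftypes_iff: "wf_interp I \<Longrightarrow> qm_f \<phi> I \<in> ftypes \<phi> \<longleftrightarrow> sat I \<phi>"
  using quasimodel_qm ftypesD sat_iff_norm_in_qm_f by (fastforce simp: ftypes_def)

lemma sat_lit_iff_eq_qm_f:
  assumes "f \<in> ftypes \<phi>"
  shows "(\<forall>\<psi> \<in> lit f. sat I \<psi>) \<longleftrightarrow> f = qm_f \<phi> I"
proof
  show "\<forall>\<psi> \<in> lit f. sat I \<psi> \<Longrightarrow> f = qm_f \<phi> I"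
    using ftypesD[OF assms] qm_f_eq_if_sat_lit by blast
  show "f = qm_f \<phi> I \<Longrightarrow> \<forall>\<psi> \<in> lit f. sat I \<psi>"
    by (simp add: lit_def qm_f_def)
qed

lemma ftypes_subset_Sub: "f \<in> ftypes \<phi> \<Longrightarrow> f \<subseteq> Sub \<phi>"
  using ftypesD by (simp add: formula_type_def)

lemma finite_ftypes: "finite (ftypes \<phi>)"
proof -
  have "ftypes \<phi> \<subseteq> Pow (Sub \<phi>)" using ftypes_subset_Sub by blast
  then show ?thesis using finite_Sub by (simp add: finite_subset)
qed

lemma finite_lit_ftypes: "f \<in> ftypes \<phi> \<Longrightarrow> finite (lit f)"
proof -
  have "lit f \<subseteq> f" by (auto simp: lit_def)
  then show "f \<in> ftypes \<phi> \<Longrightarrow> ?thesis" using ftypes_subset_Sub finite_Sub by (metis finite_subset)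
qed

lemma set_list_of: "finite S \<Longrightarrow> set (list_of S) = S"
  unfolding list_of_def by (rule someI_ex) (rule finite_list)

lemma sat_BigAnd: "finite S \<Longrightarrow> sat I (BigAnd S) \<longleftrightarrow> (\<forall>\<psi> \<in> S. sat I \<psi>)"
proof -
  have "sat I (foldr FAnd xs ftrue) \<longleftrightarrow> (\<forall>\<psi> \<in> set xs. sat I \<psi>)" for xs
    by (induction xs) (auto simp: sat_ftrue)
  then show "finite S \<Longrightarrow> ?thesis" by (simp add: BigAnd_def set_list_of)
qed

lemma sat_BigOr: "finite S \<Longrightarrow> sat I (BigOr S) \<longleftrightarrow> (\<exists>\<psi> \<in> S. sat I \<psi>)"
proof -
  have "sat I (foldr FOr xs ffalse) \<longleftrightarrow> (\<exists>\<psi> \<in> set xs. sat I \<psi>)" for xs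
    by (induction xs) (auto simp: sat_ftrue ffalse_def FOr_def)
  then show "finite S \<Longrightarrow> ?thesis" by (simp add: BigOr_def set_list_of)
qed

lemma sat_contr_if_sat:
  assumes "sat M \<phi>"
  shows "sat I (contr \<phi> M) \<longleftrightarrow> (\<exists>f \<in> qfilter \<phi> M. \<forall>\<psi> \<in> lit f. sat I \<psi>)"
proof (cases "qfilter \<phi> M = {}")
  case True
  then show ?thesis using assms by (simp add: contr_def ffalse_def sat_ftrue)
next
  case False
  have "finite (qfilter \<phi> M)" using finite_ftypes by (simp add: qfilter_def)
  moreover have "sat I (BigAnd (lit f)) \<longleftrightarrow> (\<forall>\<psi> \<in> lit f. sat I \<psi>)" if "f \<in> qfilter \<phi> M" for f
  proof -
    have "f \<in> ftypes \<phi>" using that by (simp add: qfilter_def)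
    then show ?thesis by (rule sat_BigAnd[OF finite_lit_ftypes])
  qed
  ultimately show ?thesis
    using assms False by (simp add: contr_def sat_BigOr)
qed

lemma sat_eq_if_atom_equiv:
  assumes "wf_interp I" "wf_interp J" "atom_equiv \<phi> I J"
  shows "sat I \<phi> = sat J \<phi>"
proof -
  have "qm_f \<phi> I = qm_f \<phi> J" using assms by (simp add: qm_f_eq_iff_atom_equiv)
  then show ?thesis using assms(1,2) by (simp add: sat_iff_norm_in_qm_f)
qed

lemma Mod_contr:
  assumes wf: "wf_interp M"
  shows "Mod (contr \<phi> M) = Mod \<phi> - atom_class \<phi> M"
proof (cases "sat M \<phi>")
  case False
  have "\<not> sat I \<phi>" if "I \<in> atom_class \<phi> M" for I
  proof -
    from that have "wf_interp I" "atom_equiv \<phi> I M" by (simp_all add: atom_class_def)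
    then show ?thesis using sat_eq_if_atom_equiv[OF _ wf] False by blast
  qed
  then show ?thesis using False by (auto simp: contr_def Mod_def)
next
  case True
  have "sat I (contr \<phi> M) \<longleftrightarrow> sat I \<phi> \<and> \<not> atom_equiv \<phi> I M" if "wf_interp I" for I
  proof -
    have "sat I (contr \<phi> M) \<longleftrightarrow> (\<exists>f \<in> ftypes \<phi> - {qm_f \<phi> M}. \<forall>\<psi> \<in> lit f. sat I \<psi>)"
      using True by (simp add: sat_contr_if_sat qfilter_def)
    also have "\<dots> \<longleftrightarrow> (\<exists>f \<in> ftypes \<phi> - {qm_f \<phi> M}. f = qm_f \<phi> I)"
      by (rule bex_cong[OF refl]) (simp add: sat_lit_iff_eq_qm_f)
    also have "\<dots> \<longleftrightarrow> qm_f \<phi> I \<in> ftypes \<phi> \<and> qm_f \<phi> I \<noteq> qm_f \<phi> M" by blast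
    also have "\<dots> \<longleftrightarrow> sat I \<phi> \<and> \<not> atom_equiv \<phi> I M"
      using that wf by (simp add: qm_f_in_ftypes_iff qm_f_eq_iff_atom_equiv)
    finally show ?thesis .
  qed
  then show ?thesis by (auto simp: Mod_def atom_class_def)
qed

section \<open>The postulates\<close>

lemma fin_rep_Mod: "fin_rep (Mod \<psi>)"
  unfolding fin_rep_def Mod_def by (rule exI[of _ "{\<psi>}"]) auto

lemma fin_rep_Mod_diff_atom_class: "wf_interp M \<Longrightarrow> fin_rep (Mod \<phi> - atom_class \<phi> M)"
  using fin_rep_Mod[of "contr \<phi> M"] by (simp add: Mod_contr)

lemma in_atom_class_self: "wf_interp M \<Longrightarrow> M \<in> atom_class \<phi> M"
  by (simp add: atom_class_def atom_equiv_def)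

lemma atom_class_eq: "atom_equiv \<phi> M' M \<Longrightarrow> atom_class \<phi> M' = atom_class \<phi> M"
  unfolding atom_class_def atom_equiv_def by auto

definition contraction_postulates :: "(formula \<Rightarrow> interp \<Rightarrow> formula) \<Rightarrow> formula \<Rightarrow> interp \<Rightarrow> bool" where
  "contraction_postulates C' \<phi> M \<longleftrightarrow>
     \<not> sat M (C' \<phi> M)
   \<and> Mod (C' \<phi> M) \<subseteq> Mod \<phi>
   \<and> (\<forall>MM. Mod (C' \<phi> M) \<subset> MM \<and> MM \<subseteq> Mod \<phi> - atom_class \<phi> M \<longrightarrow> \<not> fin_rep MM)
   \<and> (\<forall>M'. wf_interp M' \<and> atom_equiv \<phi> M' M \<longrightarrow> Mod (C' \<phi> M) = Mod (C' \<phi> M'))"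

lemma contraction_postulates_if_Mod_eq:
  assumes C': "\<And>M. wf_interp M \<Longrightarrow> Mod (C' \<phi> M) = Mod \<phi> - atom_class \<phi> M"
    and wf: "wf_interp M"
  shows "contraction_postulates C' \<phi> M"
  unfolding contraction_postulates_def
proof (intro conjI allI impI)
  have Mod_C': "Mod (C' \<phi> M) = Mod \<phi> - atom_class \<phi> M" by (rule C'[OF wf])
  then have "M \<notin> Mod (C' \<phi> M)" using in_atom_class_self[OF wf] by blast
  then show "\<not> sat M (C' \<phi> M)" using wf by (simp add: Mod_def)
  show "Mod (C' \<phi> M) \<subseteq> Mod \<phi>" using Mod_C' by blast
  show "\<not> fin_rep MM" if "Mod (C' \<phi> M) \<subset> MM \<and> MM \<subseteq> Mod \<phi> - atom_class \<phi> M" for MM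
    using that Mod_C' by blast
  show "Mod (C' \<phi> M) = Mod (C' \<phi> M')" if "wf_interp M' \<and> atom_equiv \<phi> M' M" for M'
    using that Mod_C' C'[of M'] atom_class_eq[of \<phi> M' M] by simp
qed

lemma Mod_eq_if_contraction_postulates:
  assumes C': "\<And>M. wf_interp M \<Longrightarrow> contraction_postulates C' \<phi> M"
    and wf: "wf_interp M"
  shows "Mod (C' \<phi> M) = Mod \<phi> - atom_class \<phi> M"
proof -
  have inclusion: "Mod (C' \<phi> M) \<subseteq> Mod \<phi>"
    using C'[OF wf] by (simp add: contraction_postulates_def)
  have retainment: "\<not> fin_rep MM" if "Mod (C' \<phi> M) \<subset> MM" "MM \<subseteq> Mod \<phi> - atom_class \<phi> M" for MM
    using C'[OF wf] that by (simp add: contraction_postulates_def)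
  have "I \<notin> atom_class \<phi> M" if "I \<in> Mod (C' \<phi> M)" for I
  proof
    assume "I \<in> atom_class \<phi> M"
    then have wf_I: "wf_interp I" and "atom_equiv \<phi> I M" by (simp_all add: atom_class_def)
    then have "Mod (C' \<phi> M) = Mod (C' \<phi> I)"
      using C'[OF wf] by (simp add: contraction_postulates_def)
    moreover have "\<not> sat I (C' \<phi> I)"
      using C'[OF wf_I] by (simp add: contraction_postulates_def)
    ultimately show False using that by (simp add: Mod_def)
  qed
  with inclusion have "Mod (C' \<phi> M) \<subseteq> Mod \<phi> - atom_class \<phi> M" by blast
  moreover have "\<not> Mod (C' \<phi> M) \<subset> Mod \<phi> - atom_class \<phi> M"
    using retainment fin_rep_Mod_diff_atom_class[OF wf] by blast
  ultimately show ?thesis by blast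
qed

theorem mainTheorem1:
  fixes C' :: "formula \<Rightarrow> interp \<Rightarrow> formula"
  shows "(\<forall>\<phi> M. wf_interp M \<longrightarrow> Mod (C' \<phi> M) = Mod (contr \<phi> M)) \<longleftrightarrow>
         (\<forall>\<phi> M. wf_interp M \<longrightarrow>
            \<not> sat M (C' \<phi> M)
          \<and> Mod (C' \<phi> M) \<subseteq> Mod \<phi>
          \<and> (\<forall>MM. Mod (C' \<phi> M) \<subset> MM \<and> MM \<subseteq> Mod \<phi> - atom_class \<phi> M \<longrightarrow> \<not> fin_rep MM)
          \<and> (\<forall>M'. wf_interp M' \<and> atom_equiv \<phi> M' M \<longrightarrow> Mod (C' \<phi> M) = Mod (C' \<phi> M')))"
proof -
  have "(\<forall>\<phi> M. wf_interp M \<longrightarrow> Mod (C' \<phi> M) = Mod (contr \<phi> M))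
    \<longleftrightarrow> (\<forall>\<phi> M. wf_interp M \<longrightarrow> Mod (C' \<phi> M) = Mod \<phi> - atom_class \<phi> M)"
    by (simp add: Mod_contr)
  also have "\<dots> \<longleftrightarrow> (\<forall>\<phi> M. wf_interp M \<longrightarrow> contraction_postulates C' \<phi> M)"
  proof (intro iffI allI impI)
    fix \<phi> M assume "\<forall>\<phi> M. wf_interp M \<longrightarrow> Mod (C' \<phi> M) = Mod \<phi> - atom_class \<phi> M" "wf_interp M"
    then show "contraction_postulates C' \<phi> M" by (simp add: contraction_postulates_if_Mod_eq)
  next
    fix \<phi> M assume "\<forall>\<phi> M. wf_interp M \<longrightarrow> contraction_postulates C' \<phi> M" "wf_interp M"
    then show "Mod (C' \<phi> M) = Mod \<phi> - atom_class \<phi> M" by (simp add: Mod_eq_if_contraction_postulates)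
  qed
  finally show ?thesis
    unfolding contraction_postulates_def .
qed

end
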